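(* Let $G$ be the final graph of the uncoordinated construction (described in the context) on a set $P\subset\mathbb{R}^d$ of $n$ points with parameter $s>1$. Then $G$ is a spanner with stretch factor $(s+1)/(s-1)$ (for all $p,q\in P$ the shortest path length in $G$, with edges weighted by Euclidean length, is at most $\frac{s+1}{s-1}|pq|$) and $G$ has $O(n s^d)$ edges, where the implied constant depends only on $d$.
   Context: Fix $d\ge 1$; $|xy|$ is Euclidean distance. Uncoordinated construction: start with the graph $G$ on vertex set $P$ with no edges. Every ordered pair $(p,q)$ of distinct points of $P$ is processed exactly once, in an arbitrary order, one at a time. When $(p,q)$ is processed, the edge $pq$ is added to $G$ unless $G$ currently contains an edge whose endpoints can be labeled $p',q'$ with $|pp'|\le |p'q'|/(2s+2)$ and $|qq'|\le |p'q'|/(2s+2)$. $G$ is the graph after all pairs are processed. *)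

theory Defs
  imports "HOL-Analysis.Analysis"
begin

text \<open>Undirected graphs on points are represented by their edge sets, each edge
  being the doubleton set of its two endpoints.\<close>

definition covered :: "real \<Rightarrow> 'a::euclidean_space set set \<Rightarrow> 'a \<Rightarrow> 'a \<Rightarrow> bool" where
  "covered s E p q \<longleftrightarrow> (\<exists>p' q'. {p', q'} \<in> E \<and>
      dist p p' \<le> dist p' q' / (2 * s + 2) \<and> dist q q' \<le> dist p' q' / (2 * s + 2))"

definition process_pair :: "real \<Rightarrow> 'a::euclidean_space set set \<Rightarrow> 'a \<times> 'a \<Rightarrow> 'a set set" where
  "process_pair s E pq = (if covered s E (fst pq) (snd pq) then E else insert {fst pq, snd pq} E)"

definition uncoordinated_graph :: "real \<Rightarrow> ('a::euclidean_space \<times> 'a) list \<Rightarrow> 'a set set" where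
  "uncoordinated_graph s pairs = foldl (process_pair s) {} pairs"

definition valid_order :: "'a set \<Rightarrow> ('a \<times> 'a) list \<Rightarrow> bool" where
  "valid_order P pairs \<longleftrightarrow> distinct pairs \<and> set pairs = {(p, q). p \<in> P \<and> q \<in> P \<and> p \<noteq> q}"

definition is_walk :: "'a set set \<Rightarrow> 'a list \<Rightarrow> 'a \<Rightarrow> 'a \<Rightarrow> bool" where
  "is_walk E xs p q \<longleftrightarrow> xs \<noteq> [] \<and> hd xs = p \<and> last xs = q \<and>
      (\<forall>(a, b) \<in> set (zip xs (tl xs)). {a, b} \<in> E)"

definition walk_length :: "'a::metric_space list \<Rightarrow> real" where
  "walk_length xs = sum_list (map (\<lambda>(a, b). dist a b) (zip xs (tl xs)))"

end

theory Submission
  imports Defs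
begin

(*
  Stretch: when (p, q) is not an edge it is covered by an edge p'q' with |pp'|, |qq'| at most
  |p'q'|/(2s+2). The pairs (p, p') and (q', q) are then strictly shorter than pq, so by
  induction on the distance they are joined by walks of stretch t = (s+1)/(s-1), and the walk
  p ~> p' -- q' ~> q has length at most t |pq|.

  Size: an edge is only added when it is not covered, so the final graph is separated: no two
  distinct edges have both pairs of corresponding endpoints within 1/(2s+2) of the shorter
  length. Give an edge of length about A 2^k, A = d (2s+2), the level k of the dyadic grid;
  points in one level-k cell are then within |e|/(2s+2). Raise the level to a node of the
  compressed quadtree of P at which the cell of one endpoint branches while the point sets of
  both cells stay unchanged. The edge is then determined by that node and the grid offset of
  its other endpoint, which has O(s)^d possible values, and the compressed quadtree has at
  most 3n nodes.
*)

definition graph_on :: "'a set \<Rightarrow> 'a set set \<Rightarrow> bool" where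
  "graph_on P E \<longleftrightarrow> (\<forall>e\<in>E. \<exists>p q. e = {p, q} \<and> p \<in> P \<and> q \<in> P \<and> p \<noteq> q)"

definition close_edges :: "real \<Rightarrow> 'a::metric_space \<Rightarrow> 'a \<Rightarrow> 'a \<Rightarrow> 'a \<Rightarrow> bool" where
  "close_edges s p q p' q' \<longleftrightarrow>
     dist p p' \<le> min (dist p q) (dist p' q') / (2 * s + 2) \<and>
     dist q q' \<le> min (dist p q) (dist p' q') / (2 * s + 2)"

definition separated :: "real \<Rightarrow> 'a::metric_space set set \<Rightarrow> bool" where
  "separated s E \<longleftrightarrow> (\<forall>p q p' q'. {p, q} \<in> E \<longrightarrow> {p', q'} \<in> E \<longrightarrow>
     close_edges s p q p' q' \<longrightarrow> {p, q} = {p', q'})"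

lemma separatedD:
  "separated s E \<Longrightarrow> {p, q} \<in> E \<Longrightarrow> {p', q'} \<in> E \<Longrightarrow> close_edges s p q p' q' \<Longrightarrow> {p, q} = {p', q'}"
  unfolding separated_def by blast

lemma close_edges_commute: "close_edges s p q p' q' \<longleftrightarrow> close_edges s p' q' p q"
  unfolding close_edges_def by (simp add: dist_commute min.commute)

lemma close_edges_swap: "close_edges s p q p' q' \<longleftrightarrow> close_edges s q p q' p'"
  unfolding close_edges_def by (auto simp: dist_commute min.commute)

lemma graph_on_endpoints: "graph_on P E \<Longrightarrow> {p, q} \<in> E \<Longrightarrow> p \<in> P \<and> q \<in> P"
  unfolding graph_on_def by (metis doubleton_eq_iff)

lemma covered_mono: "covered s E p q \<Longrightarrow> E \<subseteq> E' \<Longrightarrow> covered s E' p q"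
  unfolding covered_def by blast

lemma covered_if_close_edges:
  assumes "s > -1" "{p', q'} \<in> E" "close_edges s p q p' q'"
  shows "covered s E p q"
proof -
  have "min (dist p q) (dist p' q') / (2 * s + 2) \<le> dist p' q' / (2 * s + 2)"
    using \<open>s > -1\<close> by (simp add: divide_right_mono)
  then show ?thesis
    using assms unfolding covered_def close_edges_def by (meson order_trans)
qed

lemma not_close_to_uncovered_edge:
  assumes "s > -1" "\<not> covered s E a b" "{p, q} = {a, b}" "{p', q'} \<in> E"
  shows "\<not> close_edges s p q p' q'"
proof
  assume close: "close_edges s p q p' q'"
  consider "p = a" "q = b" | "p = b" "q = a"
    using \<open>{p, q} = {a, b}\<close> by (auto simp: doubleton_eq_iff)
  then show False
  proof cases
    case 1
    then show False using covered_if_close_edges[OF \<open>s > -1\<close> \<open>{p', q'} \<in> E\<close>] close assms(2) by simp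
  next
    case 2
    have "{q', p'} \<in> E" using \<open>{p', q'} \<in> E\<close> by (simp add: insert_commute)
    moreover have "close_edges s a b q' p'" using close 2 close_edges_swap by blast
    ultimately show False using covered_if_close_edges[OF \<open>s > -1\<close>] assms(2) by blast
  qed
qed

lemma separated_insert:
  assumes "separated s E" "\<not> covered s E a b" "s > -1"
  shows "separated s (insert {a, b} E)"
  unfolding separated_def
proof (intro allI impI)
  fix p q p' q'
  assume "{p, q} \<in> insert {a, b} E" "{p', q'} \<in> insert {a, b} E" and close: "close_edges s p q p' q'"
  then consider "{p, q} = {a, b}" "{p', q'} = {a, b}" | "{p, q} = {a, b}" "{p', q'} \<in> E"
    | "{p', q'} = {a, b}" "{p, q} \<in> E" | "{p, q} \<in> E" "{p', q'} \<in> E"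
    by auto
  then show "{p, q} = {p', q'}"
  proof cases
    case 2
    then show ?thesis using not_close_to_uncovered_edge[OF \<open>s > -1\<close> assms(2)] close by blast
  next
    case 3
    then show ?thesis
      using not_close_to_uncovered_edge[OF \<open>s > -1\<close> assms(2)] close close_edges_commute by blast
  next
    case 4
    then show ?thesis using separatedD[OF assms(1)] close by blast
  qed simp
qed

lemma foldl_process_pair_mono: "E \<subseteq> foldl (process_pair s) E xs"
proof (induction xs arbitrary: E)
  case (Cons x xs)
  have "E \<subseteq> process_pair s E x" unfolding process_pair_def by auto
  then show ?case using Cons.IH[of "process_pair s E x"] by simp
qed simp

lemma foldl_process_pair_edge_or_covered:
  "(p, q) \<in> set xs \<Longrightarrow>
     {p, q} \<in> foldl (process_pair s) E xs \<or> covered s (foldl (process_pair s) E xs) p q"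
proof (induction xs arbitrary: E)
  case Nil
  then show ?case by simp
next
  case (Cons x xs)
  let ?E' = "process_pair s E x"
  show ?case
  proof (cases "x = (p, q)")
    case True
    then have "{p, q} \<in> ?E' \<or> covered s ?E' p q"
      unfolding process_pair_def by auto
    moreover have "?E' \<subseteq> foldl (process_pair s) ?E' xs"
      by (rule foldl_process_pair_mono)
    ultimately show ?thesis
      using covered_mono[of s ?E' p q] by auto
  next
    case False
    then show ?thesis using Cons.IH[of ?E'] Cons.prems by simp
  qed
qed

lemma foldl_process_pair_invariant:
  assumes "separated s E" "graph_on P E" "s > -1" "\<forall>(p, q)\<in>set xs. p \<in> P \<and> q \<in> P \<and> p \<noteq> q"
  shows "separated s (foldl (process_pair s) E xs) \<and> graph_on P (foldl (process_pair s) E xs)"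
  using assms
proof (induction xs arbitrary: E)
  case Nil
  then show ?case by simp
next
  case (Cons x xs)
  obtain p q where x: "x = (p, q)" by (cases x)
  have "p \<in> P" "q \<in> P" "p \<noteq> q" using Cons.prems(4) x by auto
  then have "graph_on P (insert {p, q} E)"
    using Cons.prems(2) unfolding graph_on_def by blast
  then have "separated s (process_pair s E x) \<and> graph_on P (process_pair s E x)"
    using separated_insert[of s E p q] Cons.prems(1-3) x
    unfolding process_pair_def by simp
  then show ?case using Cons.IH[of "process_pair s E x"] Cons.prems(3,4) by simp
qed

lemma uncoordinated_graph_properties:
  assumes "valid_order P pairs" "s > 1"
  defines "G \<equiv> uncoordinated_graph s pairs"
  shows "graph_on P G" "separated s G"
    "\<And>p q. p \<in> P \<Longrightarrow> q \<in> P \<Longrightarrow> p \<noteq> q \<Longrightarrow> {p, q} \<in> G \<or> covered s G p q"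
proof -
  have pairs: "set pairs = {(p, q). p \<in> P \<and> q \<in> P \<and> p \<noteq> q}"
    using assms(1) unfolding valid_order_def by blast
  have "separated s G \<and> graph_on P G"
    unfolding G_def uncoordinated_graph_def
    by (rule foldl_process_pair_invariant) (use pairs \<open>s > 1\<close> in \<open>simp_all add: separated_def graph_on_def\<close>)
  then show "graph_on P G" "separated s G" by auto
  show "{p, q} \<in> G \<or> covered s G p q" if "p \<in> P" "q \<in> P" "p \<noteq> q" for p q
    unfolding G_def uncoordinated_graph_def
    by (rule foldl_process_pair_edge_or_covered) (use pairs that in auto)
qed

lemma zip_tl_append:
  "xs \<noteq> [] \<Longrightarrow> ys \<noteq> [] \<Longrightarrow>
   zip (xs @ ys) (tl (xs @ ys)) = zip xs (tl xs) @ (last xs, hd ys) # zip ys (tl ys)"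
  by (induction xs rule: induct_list012) (auto simp: neq_Nil_conv)

lemma is_walk_singleton: "is_walk E [p] p p" and walk_length_singleton: "walk_length [p] = 0"
  by (auto simp: is_walk_def walk_length_def)

lemma is_walk_edge: "{p, q} \<in> E \<Longrightarrow> is_walk E [p, q] p q"
  and walk_length_edge: "walk_length [p, q] = dist p q"
  by (auto simp: is_walk_def walk_length_def)

lemma is_walk_append:
  assumes "is_walk E xs a b" "is_walk E ys c d" "{b, c} \<in> E"
  shows "is_walk E (xs @ ys) a d"
    and "walk_length (xs @ ys) = walk_length xs + dist b c + walk_length ys"
proof -
  have "xs \<noteq> []" "ys \<noteq> []" using assms by (auto simp: is_walk_def)
  moreover have "b = last xs" "c = hd ys" using assms by (auto simp: is_walk_def)
  ultimately have "zip (xs @ ys) (tl (xs @ ys)) = zip xs (tl xs) @ (b, c) # zip ys (tl ys)"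
    using zip_tl_append by blast
  then show "is_walk E (xs @ ys) a d"
    and "walk_length (xs @ ys) = walk_length xs + dist b c + walk_length ys"
    using assms \<open>xs \<noteq> []\<close> \<open>ys \<noteq> []\<close> unfolding is_walk_def walk_length_def by auto
qed

lemma covering_edge_bounds:
  fixes a b L D s :: real
  assumes "s > 1" "D > 0" "0 \<le> a" "0 \<le> b" "L \<le> a + D + b"
    and "a \<le> L / (2 * s + 2)" "b \<le> L / (2 * s + 2)"
  shows "a < D" "b < D" "(s + 1) / (s - 1) * a + L + (s + 1) / (s - 1) * b \<le> (s + 1) / (s - 1) * D"
proof -
  have a: "a * (2 * s + 2) \<le> L" and b: "b * (2 * s + 2) \<le> L"
    using assms by (simp_all add: field_simps)
  have "L * (s + 1) \<le> (a + D + b) * (s + 1)"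
    using assms by (intro mult_right_mono) auto
  then have L: "L * s \<le> D * (s + 1)"
    using a b by (simp add: algebra_simps)
  have "x < D" if "x * (2 * s + 2) \<le> L" "0 \<le> x" for x
  proof -
    have "x * (2 * s + 2) * s \<le> L * s"
      using that \<open>s > 1\<close> by (simp add: mult_right_mono)
    then have "(2 * x * s) * (s + 1) \<le> D * (s + 1)"
      using L by (simp add: algebra_simps)
    then have "2 * x * s \<le> D" using \<open>s > 1\<close> by (simp add: mult_le_cancel_right)
    moreover have "x \<le> x * s" using that \<open>s > 1\<close> by (simp add: mult_le_cancel_left1)
    ultimately show ?thesis using \<open>D > 0\<close> by linarith
  qed
  then show "a < D" "b < D" using a b assms by auto
  have "(s + 1) / (s - 1) * x \<le> L / (2 * (s - 1))" if "x * (2 * s + 2) \<le> L" for x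
  proof -
    have "(s + 1) / (s - 1) * x = x * (2 * s + 2) / (2 * (s - 1))"
      using \<open>s > 1\<close> by (simp add: field_simps)
    then show ?thesis using that \<open>s > 1\<close> by (simp add: divide_right_mono)
  qed
  then have "(s + 1) / (s - 1) * a + L + (s + 1) / (s - 1) * b \<le> L / (2 * (s - 1)) + L + L / (2 * (s - 1))"
    using a b by (meson add_mono order_refl)
  also have "\<dots> = L * s / (s - 1)"
    using \<open>s > 1\<close> by (simp add: divide_simps) (simp add: algebra_simps)
  also have "\<dots> \<le> D * (s + 1) / (s - 1)"
    using L \<open>s > 1\<close> by (simp add: divide_right_mono)
  finally show "(s + 1) / (s - 1) * a + L + (s + 1) / (s - 1) * b \<le> (s + 1) / (s - 1) * D"
    by (simp add: mult.commute)
qed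
lemma spanner_of_covering:
  fixes P :: "'a::euclidean_space set"
  assumes "finite P" "s > 1" "graph_on P E"
    and covering: "\<And>p q. p \<in> P \<Longrightarrow> q \<in> P \<Longrightarrow> p \<noteq> q \<Longrightarrow> {p, q} \<in> E \<or> covered s E p q"
    and "p \<in> P" "q \<in> P"
  shows "\<exists>xs. is_walk E xs p q \<and> walk_length xs \<le> (s + 1) / (s - 1) * dist p q"
  using \<open>p \<in> P\<close> \<open>q \<in> P\<close>
proof (induction "card {(x, y) \<in> P \<times> P. dist x y < dist p q}" arbitrary: p q rule: less_induct)
  case less
  let ?t = "(s + 1) / (s - 1)"
  have IH: "\<exists>xs. is_walk E xs x y \<and> walk_length xs \<le> ?t * dist x y"
    if "x \<in> P" "y \<in> P" "dist x y < dist p q" for x y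
  proof -
    have "{(u, v) \<in> P \<times> P. dist u v < dist x y} \<subset> {(u, v) \<in> P \<times> P. dist u v < dist p q}"
      using that by auto
    moreover have "finite {(u, v) \<in> P \<times> P. dist u v < dist p q}"
      by (rule finite_subset[of _ "P \<times> P"]) (use \<open>finite P\<close> in auto)
    ultimately have "card {(u, v) \<in> P \<times> P. dist u v < dist x y} < card {(u, v) \<in> P \<times> P. dist u v < dist p q}"
      by (simp add: psubset_card_mono)
    then show ?thesis using less.hyps that by blast
  qed
  consider "p = q" | "{p, q} \<in> E" | "p \<noteq> q" "covered s E p q"
    using covering less.prems by blast
  then show ?case
  proof cases
    case 1
    then show ?thesis
      by (intro exI[of _ "[p]"]) (simp add: is_walk_singleton walk_length_singleton)
  next
    case 2
    have "1 \<le> ?t" using \<open>s > 1\<close> by simp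
    then have "dist p q \<le> ?t * dist p q"
      using mult_right_mono[of 1 ?t "dist p q"] by simp
    then show ?thesis
      by (intro exI[of _ "[p, q]"]) (simp add: is_walk_edge[OF 2] walk_length_edge)
  next
    case 3
    then obtain p' q' where e: "{p', q'} \<in> E"
      and close: "dist p p' \<le> dist p' q' / (2 * s + 2)" "dist q q' \<le> dist p' q' / (2 * s + 2)"
      unfolding covered_def by blast
    have "p' \<in> P" "q' \<in> P" using graph_on_endpoints[OF \<open>graph_on P E\<close> e] by auto
    have triangle: "dist p' q' \<le> dist p p' + dist p q + dist q q'"
      using dist_triangle[of p' q' p] dist_triangle[of p q' q] dist_commute[of p' p] by linarith
    have "dist p q > 0" using 3 by simp
    note bounds = covering_edge_bounds[OF \<open>s > 1\<close> this zero_le_dist zero_le_dist triangle close]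
    obtain W1 where W1: "is_walk E W1 p p'" "walk_length W1 \<le> ?t * dist p p'"
      using IH[OF less.prems(1) \<open>p' \<in> P\<close> bounds(1)] by blast
    obtain W2 where W2: "is_walk E W2 q' q" "walk_length W2 \<le> ?t * dist q q'"
      using IH[OF \<open>q' \<in> P\<close> less.prems(2)] bounds(2) by (metis dist_commute)
    have "walk_length (W1 @ W2) = walk_length W1 + dist p' q' + walk_length W2"
      by (rule is_walk_append(2)[OF W1(1) W2(1) e])
    also have "\<dots> \<le> ?t * dist p p' + dist p' q' + ?t * dist q q'"
      using W1(2) W2(2) by linarith
    also have "\<dots> \<le> ?t * dist p q"
      by (rule bounds(3))
    finally show ?thesis using is_walk_append(1)[OF W1(1) W2(1) e] by blast
  qed
qed

text \<open>The index of the cell of side \<open>2^k\<close> of the dyadic grid containing \<open>x\<close>;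
  it is \<open>0\<close> off \<open>Basis\<close> so that cells can be compared by function equality.\<close>

definition grid_index :: "int \<Rightarrow> 'a::euclidean_space \<Rightarrow> 'a \<Rightarrow> int" where
  "grid_index k x = (\<lambda>b. if b \<in> Basis then \<lfloor>(x \<bullet> b) / 2 powr of_int k\<rfloor> else 0)"

definition grid_cell :: "'a::euclidean_space set \<Rightarrow> int \<Rightarrow> 'a \<Rightarrow> 'a set" where
  "grid_cell P k x = {y \<in> P. grid_index k y = grid_index k x}"

lemma floor_divide_powr_two:
  fixes t :: real
  assumes "k \<le> k'"
  shows "\<lfloor>t / 2 powr of_int k'\<rfloor> = \<lfloor>t / 2 powr of_int k\<rfloor> div 2 ^ nat (k' - k)"
proof -
  have "2 powr of_int k' = 2 powr of_int k * 2 powr real (nat (k' - k))"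
    using assms by (simp flip: powr_add)
  then have "t / 2 powr of_int k' = (t / 2 powr of_int k) / real_of_int (2 ^ nat (k' - k))"
    by (simp add: powr_realpow)
  then show ?thesis by (simp only: floor_divide_real_eq_div zero_le_power zero_le_numeral)
qed

lemma grid_index_mono:
  "k \<le> k' \<Longrightarrow> grid_index k x = grid_index k y \<Longrightarrow> grid_index k' x = grid_index k' y"
  unfolding grid_index_def by (simp add: fun_eq_iff floor_divide_powr_two) metis

lemma grid_cell_mono: "k \<le> k' \<Longrightarrow> grid_cell P k x \<subseteq> grid_cell P k' x"
  unfolding grid_cell_def using grid_index_mono by blast

lemma grid_cell_self: "x \<in> P \<Longrightarrow> x \<in> grid_cell P k x"
  by (simp add: grid_cell_def)

lemma grid_cell_eq: "y \<in> grid_cell P k x \<Longrightarrow> grid_cell P k y = grid_cell P k x"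
  by (auto simp: grid_cell_def)

lemma inner_divide_powr_diff:
  "\<bar>(y \<bullet> b) / 2 powr c - (x \<bullet> b) / 2 powr c\<bar> = \<bar>(y - x) \<bullet> b\<bar> / 2 powr c"
  by (simp add: inner_diff_left abs_divide flip: diff_divide_distrib)

lemma grid_index_floor_diff:
  fixes x y :: "'a::euclidean_space"
  assumes "b \<in> Basis"
  shows "\<bar>grid_index k y b - grid_index k x b\<bar> < dist x y / 2 powr of_int k + 1"
proof -
  let ?u = "(x \<bullet> b) / 2 powr of_int k" and ?v = "(y \<bullet> b) / 2 powr of_int k"
  have "\<bar>?v - ?u\<bar> = \<bar>(y - x) \<bullet> b\<bar> / 2 powr of_int k"
    by (rule inner_divide_powr_diff)
  also have "\<dots> \<le> dist x y / 2 powr of_int k"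
    using Basis_le_norm[OF assms, of "y - x"] by (simp add: dist_norm norm_minus_commute divide_right_mono)
  finally have "\<bar>?v - ?u\<bar> \<le> dist x y / 2 powr of_int k" .
  moreover have "\<bar>\<lfloor>?v\<rfloor> - \<lfloor>?u\<rfloor>\<bar> < \<bar>?v - ?u\<bar> + 1"
    using floor_correct[of ?u] floor_correct[of ?v] by arith
  ultimately show ?thesis
    using assms unfolding grid_index_def by simp
qed

lemma dist_le_of_grid_index_eq:
  fixes x y :: "'a::euclidean_space"
  assumes "grid_index k x = grid_index k y"
  shows "dist x y \<le> DIM('a) * 2 powr of_int k"
proof -
  have "\<bar>(x - y) \<bullet> b\<bar> \<le> 2 powr of_int k" if "b \<in> Basis" for b
  proof -
    let ?u = "(x \<bullet> b) / 2 powr of_int k" and ?v = "(y \<bullet> b) / 2 powr of_int k"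
    have "\<lfloor>?u\<rfloor> = \<lfloor>?v\<rfloor>"
      using fun_cong[OF assms, of b] that by (simp add: grid_index_def)
    then have "\<bar>?u - ?v\<bar> < 1"
      using floor_correct[of ?u] floor_correct[of ?v] by linarith
    then have "\<bar>(x - y) \<bullet> b\<bar> / 2 powr of_int k < 1"
      by (simp add: inner_divide_powr_diff)
    then show ?thesis by simp
  qed
  then have "norm (x - y) \<le> (\<Sum>b\<in>(Basis::'a set). 2 powr of_int k)"
    using norm_le_l1[of "x - y"] sum_mono by (metis (no_types, lifting) order_trans)
  then show ?thesis by (simp add: dist_norm)
qed

text \<open>The nodes of the compressed quadtree of \<open>P\<close> cut off at level \<open>K\<close>: cells that are
  proper subsets of their parent cell, and all cells of level \<open>K\<close>.\<close>

definition branching_cells :: "'a::euclidean_space set \<Rightarrow> int \<Rightarrow> (int \<times> 'a set) set" where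
  "branching_cells P K = {(k, grid_cell P k x) | k x. x \<in> P \<and> k \<le> K \<and>
     (k < K \<longrightarrow> grid_cell P (k + 1) x \<noteq> grid_cell P k x)}"

definition cell_leader :: "('a \<Rightarrow> nat) \<Rightarrow> 'a::euclidean_space set \<Rightarrow> int \<Rightarrow> 'a \<Rightarrow> 'a" where
  "cell_leader f P k x = arg_min_on f (grid_cell P k x)"

definition leaves_at :: "('a \<Rightarrow> nat) \<Rightarrow> 'a::euclidean_space set \<Rightarrow> int \<Rightarrow> 'a \<Rightarrow> bool" where
  "leaves_at f P k z \<longleftrightarrow> cell_leader f P k z = z \<and> cell_leader f P (k + 1) z \<noteq> z"

text \<open>A branching cell is charged to its leader (the \<open>f\<close>-least point in it), unless the
  leader also leads the parent cell; then it is charged to the leader of a sibling cell.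
  Either point stops leading at that level, which happens at only one level per point.\<close>

definition cell_code :: "('a \<Rightarrow> nat) \<Rightarrow> 'a::euclidean_space set \<Rightarrow> int \<Rightarrow> int \<times> 'a set \<Rightarrow> 'a \<times> nat" where
  "cell_code f P K kC = (case kC of (k, C) \<Rightarrow> let r = arg_min_on f C in
     if k = K then (r, 0)
     else if cell_leader f P (k + 1) r \<noteq> r then (r, 1)
     else (cell_leader f P k (arg_min_on f (grid_cell P (k + 1) r - C)), 2))"

context
  fixes f :: "'a::euclidean_space \<Rightarrow> nat" and P :: "'a set"
  assumes finite: "finite P" and inj: "inj_on f P"
begin

lemma cell_leader_in: "x \<in> P \<Longrightarrow> cell_leader f P k x \<in> grid_cell P k x"
  unfolding cell_leader_def
  by (rule arg_min_if_finite(1)) (auto simp: grid_cell_def finite)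

lemma cell_leader_least: "x \<in> P \<Longrightarrow> y \<in> grid_cell P k x \<Longrightarrow> f (cell_leader f P k x) \<le> f y"
  unfolding cell_leader_def
  by (rule arg_min_least) (auto simp: grid_cell_def finite)

lemma cell_leader_mem: "x \<in> P \<Longrightarrow> cell_leader f P k x \<in> P"
  using cell_leader_in by (auto simp: grid_cell_def)

lemma cell_leader_cong: "y \<in> grid_cell P k x \<Longrightarrow> cell_leader f P k y = cell_leader f P k x"
  unfolding cell_leader_def by (simp add: grid_cell_eq)

lemma leaves_at_unique:
  assumes "z \<in> P" "leaves_at f P k z" "leaves_at f P k' z"
  shows "k = k'"
proof -
  have False if "leaves_at f P k z" "leaves_at f P k' z" "k < k'" for k k'
  proof -
    have "f z = f (cell_leader f P k' z)"
      using that(2) by (simp add: leaves_at_def)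
    also have "\<dots> \<le> f (cell_leader f P (k + 1) z)"
      using cell_leader_in[OF \<open>z \<in> P\<close>] grid_cell_mono[of "k + 1" k' P z] that(3)
      by (intro cell_leader_least[OF \<open>z \<in> P\<close>]) auto
    finally have "f z \<le> f (cell_leader f P (k + 1) z)" .
    moreover have "f (cell_leader f P (k + 1) z) \<le> f z"
      by (intro cell_leader_least \<open>z \<in> P\<close> grid_cell_self)
    ultimately have "cell_leader f P (k + 1) z = z"
      using inj_onD[OF inj _ cell_leader_mem \<open>z \<in> P\<close>] \<open>z \<in> P\<close> by simp
    then show False using that(1) by (simp add: leaves_at_def)
  qed
  then show ?thesis using assms(2,3) by (meson linorder_neqE)
qed

lemma branching_cellE:
  assumes "(k, C) \<in> branching_cells P K"
  obtains r where "r \<in> P" "C = grid_cell P k r" "arg_min_on f C = r" "k \<le> K"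
    "k < K \<Longrightarrow> C \<subset> grid_cell P (k + 1) r"
proof -
  obtain x where x: "x \<in> P" "C = grid_cell P k x" "k \<le> K"
    and branching: "k < K \<Longrightarrow> grid_cell P (k + 1) x \<noteq> grid_cell P k x"
    using assms unfolding branching_cells_def by blast
  define r where "r = cell_leader f P k x"
  have r_cell: "r \<in> grid_cell P k x" unfolding r_def by (rule cell_leader_in[OF x(1)])
  then have cell: "C = grid_cell P k r"
    using x(2) grid_cell_eq by metis
  have "r \<in> grid_cell P (k + 1) x" using r_cell grid_cell_mono[of k "k + 1" P x] by auto
  then have parent: "grid_cell P (k + 1) r = grid_cell P (k + 1) x" by (rule grid_cell_eq)
  show thesis
  proof
    show "r \<in> P" unfolding r_def by (rule cell_leader_mem[OF x(1)])
    show "arg_min_on f C = r" using x(2) by (simp add: r_def cell_leader_def)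
    show "C \<subset> grid_cell P (k + 1) r" if "k < K"
      using branching[OF that] grid_cell_mono[of k "k + 1" P x] x(2) parent by auto
  qed (use cell x(3) in auto)
qed

lemma sibling_leader_leaves:
  assumes "r \<in> P" "C = grid_cell P k r" "C \<subset> grid_cell P (k + 1) r" "cell_leader f P (k + 1) r = r"
  defines "z \<equiv> cell_leader f P k (arg_min_on f (grid_cell P (k + 1) r - C))"
  shows "z \<in> P" "leaves_at f P k z" "grid_cell P (k + 1) z = grid_cell P (k + 1) r"
proof -
  define y where "y = arg_min_on f (grid_cell P (k + 1) r - C)"
  have "finite (grid_cell P (k + 1) r - C)" using finite by (simp add: grid_cell_def)
  then have y: "y \<in> grid_cell P (k + 1) r" "y \<notin> C"
    using arg_min_if_finite(1)[of "grid_cell P (k + 1) r - C" f] assms(3) unfolding y_def by auto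
  then have "y \<in> P" by (simp add: grid_cell_def)
  have z: "z \<in> grid_cell P k y" unfolding z_def y_def[symmetric] by (rule cell_leader_in[OF \<open>y \<in> P\<close>])
  then show "z \<in> P" by (simp add: grid_cell_def)
  have "z \<in> grid_cell P (k + 1) y" using z grid_cell_mono[of k "k + 1" P y] by auto
  then show parent: "grid_cell P (k + 1) z = grid_cell P (k + 1) r"
    using y(1) grid_cell_eq by metis
  have "z \<noteq> r"
  proof
    assume "z = r"
    then have "grid_cell P k y = C" using z assms(2) grid_cell_eq by metis
    then show False using y(2) grid_cell_self[OF \<open>y \<in> P\<close>] by blast
  qed
  moreover have "cell_leader f P (k + 1) z = r"
    using parent assms(4) by (simp add: cell_leader_def)
  moreover have "cell_leader f P k z = z"
    using z unfolding z_def y_def[symmetric] by (simp add: cell_leader_cong)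
  ultimately show "leaves_at f P k z" by (simp add: leaves_at_def)
qed

lemma cell_code_cases:
  assumes "(k, C) \<in> branching_cells P K"
  obtains r where "r \<in> P" "C = grid_cell P k r" "k = K" "cell_code f P K (k, C) = (r, 0)"
  | r where "r \<in> P" "C = grid_cell P k r" "leaves_at f P k r" "cell_code f P K (k, C) = (r, 1)"
  | r z where "r \<in> P" "C = grid_cell P k r" "z \<in> P" "leaves_at f P k z"
      "grid_cell P (k + 1) z = grid_cell P (k + 1) r" "cell_leader f P (k + 1) r = r"
      "cell_code f P K (k, C) = (z, 2)"
proof -
  obtain r where r: "r \<in> P" "C = grid_cell P k r" "arg_min_on f C = r" "k \<le> K"
    and proper: "k < K \<Longrightarrow> C \<subset> grid_cell P (k + 1) r"
    using branching_cellE[OF assms] by blast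
  consider "k = K" | "k < K" "cell_leader f P (k + 1) r \<noteq> r" | "k < K" "cell_leader f P (k + 1) r = r"
    using r(4) by linarith
  then show thesis
  proof cases
    case 1
    then show thesis using that(1) r by (simp add: cell_code_def)
  next
    case 2
    have "leaves_at f P k r"
      using 2(2) r(2,3) by (simp add: leaves_at_def cell_leader_def)
    then show thesis using that(2) r 2 by (simp add: cell_code_def)
  next
    case 3
    note sibling = sibling_leader_leaves[OF r(1,2) proper[OF 3(1)] 3(2)]
    show thesis
      by (rule that(3)[OF r(1,2) sibling 3(2)]) (use 3 r(3) in \<open>simp add: cell_code_def\<close>)
  qed
qed

lemma inj_on_cell_code: "inj_on (cell_code f P K) (branching_cells P K)"
proof (rule inj_onI, clarify)
  fix k C k' C'
  assume node: "(k, C) \<in> branching_cells P K" and node': "(k', C') \<in> branching_cells P K"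
    and code: "cell_code f P K (k, C) = cell_code f P K (k', C')"
  show "k = k' \<and> C = C'"
  proof (cases rule: cell_code_cases[OF node])
    case (1 r)
    then show ?thesis
      by (cases rule: cell_code_cases[OF node']) (use code in auto)
  next
    case (2 r)
    then show ?thesis
    proof (cases rule: cell_code_cases[OF node'])
      case (2 r')
      then show ?thesis
        using \<open>leaves_at f P k r\<close> leaves_at_unique[OF \<open>r \<in> P\<close>] code \<open>C = grid_cell P k r\<close>
          \<open>cell_code f P K (k, C) = (r, 1)\<close> by auto
    qed (use code 2 in auto)
  next
    case (3 r z)
    then show ?thesis
    proof (cases rule: cell_code_cases[OF node'])
      case (3 r' z')
      have "z = z'" using code 3 \<open>cell_code f P K (k, C) = (z, 2)\<close> by simp
      then have "k = k'"
        using leaves_at_unique[OF \<open>z \<in> P\<close> \<open>leaves_at f P k z\<close>] \<open>leaves_at f P k' z'\<close> by simp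
      then have "grid_cell P (k + 1) r = grid_cell P (k + 1) r'"
        using \<open>grid_cell P (k + 1) z = grid_cell P (k + 1) r\<close> 3(5) \<open>z = z'\<close> by simp
      then have "cell_leader f P (k + 1) r = cell_leader f P (k + 1) r'"
        by (simp add: cell_leader_def)
      then have "r = r'"
        using \<open>cell_leader f P (k + 1) r = r\<close> 3(6) \<open>k = k'\<close> by simp
      then show ?thesis using \<open>C = grid_cell P k r\<close> 3(2) \<open>k = k'\<close> by simp
    qed (use code 3 in auto)
  qed
qed

end

lemma card_branching_cells:
  assumes "finite P"
  shows "finite (branching_cells P K)" "card (branching_cells P K) \<le> 3 * card P"
proof -
  obtain f :: "'a \<Rightarrow> nat" where inj: "inj_on f P"
    using finite_imp_inj_to_nat_seg[OF assms] by blast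
  have codes: "cell_code f P K ` branching_cells P K \<subseteq> P \<times> {0, 1, 2}"
  proof (rule image_subsetI)
    fix n
    assume "n \<in> branching_cells P K"
    moreover obtain k C where "n = (k, C)" by (cases n)
    ultimately show "cell_code f P K n \<in> P \<times> {0, 1, 2}"
      by (cases rule: cell_code_cases[OF assms inj]) auto
  qed
  have "finite (P \<times> {0 :: nat, 1, 2})" using assms by simp
  then show "finite (branching_cells P K)"
    using inj_on_finite[OF inj_on_cell_code[OF assms inj] codes] by blast
  have "card (branching_cells P K) \<le> card (P \<times> {0 :: nat, 1, 2})"
    by (rule card_inj_on_le[OF inj_on_cell_code[OF assms inj] codes]) (use assms in simp)
  then show "card (branching_cells P K) \<le> 3 * card P"
    by (simp add: card_cartesian_product)
qed

lemma floor_log_bounds: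
  fixes D A :: real
  assumes "0 < D" "0 < A"
  defines "k \<equiv> \<lfloor>log 2 (D / A)\<rfloor>"
  shows "A * 2 powr of_int k \<le> D" "D < 2 * A * 2 powr of_int k"
proof -
  have "2 powr of_int k \<le> 2 powr (log 2 (D / A))"
    unfolding k_def by (intro powr_mono) auto
  then show "A * 2 powr of_int k \<le> D"
    using assms by (simp add: field_simps)
  have "2 powr (log 2 (D / A)) < 2 powr (of_int k + 1)"
    unfolding k_def by (intro powr_less_mono) linarith+
  then show "D < 2 * A * 2 powr of_int k"
    using assms by (simp add: powr_add field_simps)
qed

lemma exists_anchor_level:
  assumes "k \<le> K"
  obtains x' y' H where "{x', y'} = {x, y}" "k \<le> H" "H \<le> K"
    "grid_cell P H x' = grid_cell P k x'" "grid_cell P H y' = grid_cell P k y'"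
    "H < K \<Longrightarrow> grid_cell P (H + 1) x' \<noteq> grid_cell P H x'"
proof -
  define S where "S = {H. k \<le> H \<and> H \<le> K \<and>
    grid_cell P H x = grid_cell P k x \<and> grid_cell P H y = grid_cell P k y}"
  have "finite S" by (rule finite_subset[of _ "{k..K}"]) (auto simp: S_def)
  moreover have "k \<in> S" using assms by (simp add: S_def)
  ultimately have H: "Max S \<in> S" and maximal: "\<And>H. H \<in> S \<Longrightarrow> H \<le> Max S"
    by (metis Max_in empty_iff, simp)
  define H where "H = Max S"
  have change: "grid_cell P (H + 1) x \<noteq> grid_cell P H x \<or> grid_cell P (H + 1) y \<noteq> grid_cell P H y"
    if "H < K"
  proof (rule ccontr)
    assume "\<not> ?thesis"
    then have "H + 1 \<in> S" using H that unfolding S_def H_def by auto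
    then show False using maximal unfolding H_def by fastforce
  qed
  show thesis
  proof (cases "H < K \<longrightarrow> grid_cell P (H + 1) x \<noteq> grid_cell P H x")
    case True
    then show thesis using that[of x y H] H unfolding H_def S_def by auto
  next
    case False
    then show thesis using that[of y x H] H change unfolding H_def S_def by (auto simp: insert_commute)
  qed
qed

definition anchored_edge ::
    "'a::euclidean_space set \<Rightarrow> real \<Rightarrow> 'a set \<Rightarrow> 'a \<Rightarrow> 'a \<Rightarrow> int \<Rightarrow> int \<Rightarrow> bool" where
  "anchored_edge P A e x y k H \<longleftrightarrow> e = {x, y} \<and> x \<in> P \<and> y \<in> P \<and>
     A * 2 powr of_int k \<le> dist x y \<and> dist x y < 2 * A * 2 powr of_int k \<and> k \<le> H \<and>
     grid_cell P H x = grid_cell P k x \<and> grid_cell P H y = grid_cell P k y"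

lemma graph_on_anchors:
  fixes P :: "'a::euclidean_space set"
  assumes "finite P" "graph_on P E" "A > 0"
  obtains x y :: "'a set \<Rightarrow> 'a" and k H :: "'a set \<Rightarrow> int" and K :: int where
    "\<And>e. e \<in> E \<Longrightarrow> anchored_edge P A e (x e) (y e) (k e) (H e)"
    "\<And>e. e \<in> E \<Longrightarrow> (H e, grid_cell P (H e) (x e)) \<in> branching_cells P K"
proof -
  obtain u v where uv: "\<And>e. e \<in> E \<Longrightarrow> e = {u e, v e} \<and> u e \<in> P \<and> v e \<in> P \<and> u e \<noteq> v e"
    using assms(2) unfolding graph_on_def by metis
  have "E \<subseteq> (\<lambda>(p, q). {p, q}) ` (P \<times> P)"
    using uv by fast
  then have "finite E" using \<open>finite P\<close> finite_subset by blast
  define k where "k e = \<lfloor>log 2 (dist (u e) (v e) / A)\<rfloor>" for e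
  define K where "K = Max (insert 0 (k ` E))"
  have "k e \<le> K" if "e \<in> E" for e
    unfolding K_def using \<open>finite E\<close> that by simp
  then have "\<forall>e\<in>E. \<exists>x' y' H. {x', y'} = {u e, v e} \<and> k e \<le> H \<and> H \<le> K \<and>
      grid_cell P H x' = grid_cell P (k e) x' \<and> grid_cell P H y' = grid_cell P (k e) y' \<and>
      (H < K \<longrightarrow> grid_cell P (H + 1) x' \<noteq> grid_cell P H x')"
    by (metis exists_anchor_level)
  then obtain x y H where anchor: "\<And>e. e \<in> E \<Longrightarrow> {x e, y e} = {u e, v e} \<and> k e \<le> H e \<and> H e \<le> K \<and>
      grid_cell P (H e) (x e) = grid_cell P (k e) (x e) \<and> grid_cell P (H e) (y e) = grid_cell P (k e) (y e) \<and>
      (H e < K \<longrightarrow> grid_cell P (H e + 1) (x e) \<noteq> grid_cell P (H e) (x e))"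
    by metis
  show thesis
  proof (rule that[of x y k H K])
    fix e
    assume "e \<in> E"
    note e = uv[OF this] anchor[OF this]
    have ends: "{x e, y e} = {u e, v e}" and "e = {u e, v e}" "u e \<in> P" "v e \<in> P" "u e \<noteq> v e"
      using e by blast+
    then have "x e \<in> {u e, v e}" "y e \<in> {u e, v e}" by blast+
    then have "x e \<in> P" "y e \<in> P" using \<open>u e \<in> P\<close> \<open>v e \<in> P\<close> by auto
    moreover have "e = {x e, y e}" using trans[OF \<open>e = {u e, v e}\<close> ends[symmetric]] .
    moreover have "dist (x e) (y e) = dist (u e) (v e)" "dist (u e) (v e) > 0"
      using ends \<open>u e \<noteq> v e\<close> by (auto simp: doubleton_eq_iff dist_commute)
    ultimately show "anchored_edge P A e (x e) (y e) (k e) (H e)"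
      using floor_log_bounds[OF _ \<open>A > 0\<close>] e unfolding anchored_edge_def k_def by simp
    show "(H e, grid_cell P (H e) (x e)) \<in> branching_cells P K"
      using e \<open>x e \<in> P\<close> unfolding branching_cells_def by blast
  qed
qed

lemma anchored_edge_close:
  fixes P :: "'a::euclidean_space set" and c :: real
  assumes "anchored_edge P (real DIM('a) * c) e x y k H" "c > 0"
    and "u \<in> {x, y}" "w \<in> P" "grid_index H w = grid_index H u"
  shows "dist u w \<le> dist x y / c"
proof -
  have "w \<in> grid_cell P H u" using assms(4,5) by (simp add: grid_cell_def)
  also have "grid_cell P H u = grid_cell P k u"
    using assms(1,3) unfolding anchored_edge_def by auto
  finally have "dist u w \<le> DIM('a) * 2 powr of_int k"
    by (simp add: grid_cell_def dist_le_of_grid_index_eq)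
  also have "\<dots> \<le> dist x y / c"
    using assms(1,2) unfolding anchored_edge_def by (simp add: field_simps)
  finally show ?thesis .
qed

lemma anchored_edges_eq:
  fixes P :: "'a::euclidean_space set" and s :: real
  assumes "separated s E" "s > -1" "e \<in> E" "e' \<in> E"
    and "anchored_edge P (real DIM('a) * (2 * s + 2)) e x y k H"
    and "anchored_edge P (real DIM('a) * (2 * s + 2)) e' x' y' k' H"
    and "grid_index H x' = grid_index H x" "grid_index H y' = grid_index H y"
  shows "e = e'"
proof -
  have c: "2 * s + 2 > 0" using \<open>s > -1\<close> by simp
  have P: "x \<in> P" "y \<in> P" "x' \<in> P" "y' \<in> P" and e: "e = {x, y}" "e' = {x', y'}"
    using assms(5,6) unfolding anchored_edge_def by auto
  note close = anchored_edge_close[OF assms(5) c] anchored_edge_close[OF assms(6) c]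
  have "close_edges s x y x' y'"
    unfolding close_edges_def min_divide_distrib_right
    using close(1)[of x x'] close(2)[of x' x] close(1)[of y y'] close(2)[of y' y] P assms(7,8) c
    by (auto simp: dist_commute)
  then show ?thesis
    using separatedD[OF assms(1)] assms(3,4) e by metis
qed

lemma anchored_edge_offset_bound:
  fixes P :: "'a::euclidean_space set" and A :: real
  assumes "anchored_edge P A e x y k H" "b \<in> Basis"
  shows "\<bar>grid_index H y b - grid_index H x b\<bar> < 2 * A + 1"
proof -
  have "(2::real) powr of_int k \<le> 2 powr of_int H"
    using assms(1) unfolding anchored_edge_def by simp
  then have "dist x y / 2 powr of_int H \<le> dist x y / 2 powr of_int k"
    by (simp add: frac_le)
  also have "\<dots> < 2 * A"
    using assms(1) unfolding anchored_edge_def by (simp add: divide_less_eq)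
  finally show ?thesis
    using grid_index_floor_diff[OF assms(2), of H y x] by linarith
qed

lemma card_separated_graph_le:
  fixes P :: "'a::euclidean_space set" and s :: real
  assumes "finite P" "s > 1" "graph_on P E" "separated s E"
  defines "M \<equiv> nat \<lceil>4 * real DIM('a) * (s + 1)\<rceil>"
  shows "card E \<le> 3 * card P * (2 * M + 1) ^ DIM('a)"
proof -
  define A where "A = real DIM('a) * (2 * s + 2)"
  have "A > 0" using \<open>s > 1\<close> by (simp add: A_def)
  obtain x y k H K where anchor: "\<And>e. e \<in> E \<Longrightarrow> anchored_edge P A e (x e) (y e) (k e) (H e)"
    and branching: "\<And>e. e \<in> E \<Longrightarrow> (H e, grid_cell P (H e) (x e)) \<in> branching_cells P K"
    using graph_on_anchors[OF \<open>finite P\<close> \<open>graph_on P E\<close> \<open>A > 0\<close>] by blast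
  define offset where "offset e = restrict (\<lambda>b. grid_index (H e) (y e) b - grid_index (H e) (x e) b) Basis" for e
  define Box where "Box = PiE (Basis :: 'a set) (\<lambda>_. {- int M..int M})"
  have "inj_on (\<lambda>e. ((H e, grid_cell P (H e) (x e)), offset e)) E"
  proof (rule inj_onI)
    fix e e'
    assume "e \<in> E" "e' \<in> E"
      and code: "((H e, grid_cell P (H e) (x e)), offset e) = ((H e', grid_cell P (H e') (x e')), offset e')"
    have "x e' \<in> grid_cell P (H e) (x e)"
      using code grid_cell_self anchor[OF \<open>e' \<in> E\<close>] unfolding anchored_edge_def by auto
    then have x: "grid_index (H e) (x e') = grid_index (H e) (x e)"
      by (simp add: grid_cell_def)
    have y: "grid_index (H e) (y e') = grid_index (H e) (y e)"
    proof
      fix b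
      have "b \<in> Basis \<Longrightarrow> offset e b = offset e' b" using code by simp
      then show "grid_index (H e) (y e') b = grid_index (H e) (y e) b"
        using x code unfolding offset_def
        by (cases "b \<in> Basis") (auto simp: grid_index_def dest: fun_cong[of _ _ b])
    qed
    have anchor': "anchored_edge P A e' (x e') (y e') (k e') (H e)"
      using anchor[OF \<open>e' \<in> E\<close>] code by simp
    show "e = e'"
      using anchored_edges_eq[OF \<open>separated s E\<close> _ \<open>e \<in> E\<close> \<open>e' \<in> E\<close>
          anchor[OF \<open>e \<in> E\<close>, unfolded A_def] anchor'[unfolded A_def] x y] \<open>s > 1\<close>
      by simp
  qed
  moreover have "(\<lambda>e. ((H e, grid_cell P (H e) (x e)), offset e)) ` E \<subseteq> branching_cells P K \<times> Box"
  proof (rule image_subsetI)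
    fix e
    assume "e \<in> E"
    have "2 * A \<le> of_int (int M)"
      unfolding A_def M_def by (simp add: algebra_simps)
    have "grid_index (H e) (y e) b - grid_index (H e) (x e) b \<in> {- int M..int M}" if "b \<in> Basis" for b
    proof -
      have "\<bar>grid_index (H e) (y e) b - grid_index (H e) (x e) b\<bar> \<le> int M"
        using anchored_edge_offset_bound[OF anchor[OF \<open>e \<in> E\<close>] that] \<open>2 * A \<le> of_int (int M)\<close>
        by linarith
      then show ?thesis by (simp add: abs_le_iff)
    qed
    then have "offset e \<in> Box" unfolding offset_def Box_def by auto
    then show "((H e, grid_cell P (H e) (x e)), offset e) \<in> branching_cells P K \<times> Box"
      using branching[OF \<open>e \<in> E\<close>] by blast
  qed
  moreover have "finite (branching_cells P K \<times> Box)"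
    using card_branching_cells(1)[OF \<open>finite P\<close>] by (simp add: Box_def finite_PiE)
  ultimately have "card E \<le> card (branching_cells P K \<times> Box)"
    by (rule card_inj_on_le)
  also have "\<dots> = card (branching_cells P K) * (2 * M + 1) ^ DIM('a)"
  proof -
    have "card {- int M..int M} = 2 * M + 1" by (simp add: nat_add_distrib nat_mult_distrib)
    then show ?thesis by (simp add: card_cartesian_product Box_def card_PiE)
  qed
  also have "\<dots> \<le> 3 * card P * (2 * M + 1) ^ DIM('a)"
    using card_branching_cells(2)[OF \<open>finite P\<close>] by simp
  finally show ?thesis .
qed

lemma card_separated_graph:
  fixes P :: "'a::euclidean_space set" and s :: real
  assumes "finite P" "s > 1" "graph_on P E" "separated s E"
  shows "real (card E) \<le> 3 * (16 * real DIM('a) + 3) ^ DIM('a) * real (card P) * s ^ DIM('a)"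
proof -
  define d where "d = real DIM('a)"
  define M where "M = nat \<lceil>4 * d * (s + 1)\<rceil>"
  have "real M = of_int \<lceil>4 * d * (s + 1)\<rceil>"
    unfolding M_def using \<open>s > 1\<close> by (simp add: d_def)
  then have "real (2 * M + 1) \<le> 8 * d * s + (8 * d + 3)"
    using of_int_ceiling_le_add_one[of "4 * d * (s + 1)"] by (simp add: algebra_simps)
  also have "\<dots> \<le> (16 * d + 3) * s"
    using \<open>s > 1\<close> mult_right_mono[of 1 s "8 * d + 3"] by (simp add: d_def algebra_simps)
  finally have bound: "real (2 * M + 1) ^ DIM('a) \<le> ((16 * d + 3) * s) ^ DIM('a)"
    by (rule power_mono) simp
  have card: "card E \<le> 3 * card P * (2 * M + 1) ^ DIM('a)"
    using card_separated_graph_le[OF assms] unfolding M_def d_def .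
  have "real (card E) \<le> 3 * real (card P) * real (2 * M + 1) ^ DIM('a)"
    using of_nat_mono[OF card, where 'a=real] by simp
  also have "\<dots> \<le> 3 * real (card P) * ((16 * d + 3) * s) ^ DIM('a)"
    by (rule mult_left_mono[OF bound]) simp
  also have "\<dots> = 3 * (16 * real DIM('a) + 3) ^ DIM('a) * real (card P) * s ^ DIM('a)"
    by (simp add: d_def power_mult_distrib)
  finally show ?thesis .
qed

theorem theorem9:
  "\<exists>C::real. \<forall>(P :: 'a::euclidean_space set) (s::real) pairs.
      finite P \<and> s > 1 \<and> valid_order P pairs \<longrightarrow>
        (\<forall>p\<in>P. \<forall>q\<in>P. \<exists>xs. is_walk (uncoordinated_graph s pairs) xs p q \<and>
            walk_length xs \<le> (s + 1) / (s - 1) * dist p q)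
        \<and> real (card (uncoordinated_graph s pairs)) \<le> C * real (card P) * s ^ DIM('a)"
proof (intro exI[of _ "3 * (16 * real DIM('a) + 3) ^ DIM('a)"] allI impI conjI ballI)
  fix P :: "'a set" and s :: real and pairs
  assume "finite P \<and> s > 1 \<and> valid_order P pairs"
  then have "finite P" "s > 1" "valid_order P pairs" by auto
  note G = uncoordinated_graph_properties[OF \<open>valid_order P pairs\<close> \<open>s > 1\<close>]
  show "\<exists>xs. is_walk (uncoordinated_graph s pairs) xs p q \<and> walk_length xs \<le> (s + 1) / (s - 1) * dist p q"
    if "p \<in> P" "q \<in> P" for p q
    by (rule spanner_of_covering[OF \<open>finite P\<close> \<open>s > 1\<close> G(1) G(3) that])
  show "real (card (uncoordinated_graph s pairs)) \<le> 3 * (16 * real DIM('a) + 3) ^ DIM('a) * real (card P) * s ^ DIM('a)"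
    by (rule card_separated_graph[OF \<open>finite P\<close> \<open>s > 1\<close> G(1,2)])
qed

end
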